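(* Let $G$ be a BDH graph with color classes $X$ and $Y$. Then each of the 2-sections of the hypergraphs $\mathcal{N}_X(G)$, $\mathcal{N}_X(G)^\uparrow$, $\mathcal{N}_Y(G)$ and $\mathcal{N}_Y(G)^\uparrow$ is a Ptolemaic graph.
   Context: $\mathcal{N}_X(G)=(N(y)\mid y\in Y)$ is the family of neighborhoods of vertices of $Y$, a hypergraph on $X$; $\mathcal{N}_Y(G)=(N(x)\mid x\in X)$ is defined symmetrically on $Y$. For a hypergraph $\mathcal{H}$, $\mathcal{H}^\uparrow$ is obtained by identifying equal members and keeping only inclusion-wise maximal members. The 2-section of a hypergraph $\mathcal{H}$ on $V$ is the graph on $V$ in which $u\neq v$ are adjacent iff some member of $\mathcal{H}$ contains both. A Ptolemaic graph is a graph that is both chordal (no induced chordless cycle of length $\ge4$) and distance hereditary. A graph is distance hereditary if distances in every connected induced subgraph equal distances in the graph; BDH means bipartite distance hereditary. *)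

theory Defs
  imports Main
begin

definition graph :: "'a set \<Rightarrow> ('a \<Rightarrow> 'a \<Rightarrow> bool) \<Rightarrow> bool" where
  "graph V E \<longleftrightarrow> finite V \<and> (\<forall>u v. E u v \<longrightarrow> u \<in> V \<and> v \<in> V \<and> u \<noteq> v \<and> E v u)"

text \<open>A walk inside the vertex set S (so walks in S are walks of the induced subgraph G[S]).\<close>
definition walk :: "'a set \<Rightarrow> ('a \<Rightarrow> 'a \<Rightarrow> bool) \<Rightarrow> 'a list \<Rightarrow> bool" where
  "walk S E xs \<longleftrightarrow> xs \<noteq> [] \<and> set xs \<subseteq> S \<and> (\<forall>i. Suc i < length xs \<longrightarrow> E (xs ! i) (xs ! Suc i))"

definition connected_graph :: "'a set \<Rightarrow> ('a \<Rightarrow> 'a \<Rightarrow> bool) \<Rightarrow> bool" where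
  "connected_graph S E \<longleftrightarrow>
     (\<forall>u\<in>S. \<forall>v\<in>S. \<exists>xs. walk S E xs \<and> hd xs = u \<and> last xs = v)"

definition gdist :: "'a set \<Rightarrow> ('a \<Rightarrow> 'a \<Rightarrow> bool) \<Rightarrow> 'a \<Rightarrow> 'a \<Rightarrow> nat" where
  "gdist S E u v = (LEAST n. \<exists>xs. walk S E xs \<and> hd xs = u \<and> last xs = v \<and> length xs = Suc n)"

definition distance_hereditary :: "'a set \<Rightarrow> ('a \<Rightarrow> 'a \<Rightarrow> bool) \<Rightarrow> bool" where
  "distance_hereditary V E \<longleftrightarrow>
     (\<forall>S. S \<subseteq> V \<longrightarrow> connected_graph S E \<longrightarrow>
        (\<forall>u\<in>S. \<forall>v\<in>S. gdist S E u v = gdist V E u v))"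

definition induced_cycle :: "'a set \<Rightarrow> ('a \<Rightarrow> 'a \<Rightarrow> bool) \<Rightarrow> 'a list \<Rightarrow> bool" where
  "induced_cycle V E xs \<longleftrightarrow> distinct xs \<and> set xs \<subseteq> V \<and>
     (\<forall>i < length xs. E (xs ! i) (xs ! ((i + 1) mod length xs))) \<and>
     (\<forall>i < length xs. \<forall>j < length xs. E (xs ! i) (xs ! j) \<longrightarrow>
          j = (i + 1) mod length xs \<or> i = (j + 1) mod length xs)"

definition chordal :: "'a set \<Rightarrow> ('a \<Rightarrow> 'a \<Rightarrow> bool) \<Rightarrow> bool" where
  "chordal V E \<longleftrightarrow> \<not> (\<exists>xs. length xs \<ge> 4 \<and> induced_cycle V E xs)"

definition ptolemaic :: "'a set \<Rightarrow> ('a \<Rightarrow> 'a \<Rightarrow> bool) \<Rightarrow> bool" where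
  "ptolemaic V E \<longleftrightarrow> chordal V E \<and> distance_hereditary V E"

definition BDH :: "'a set \<Rightarrow> 'a set \<Rightarrow> ('a \<Rightarrow> 'a \<Rightarrow> bool) \<Rightarrow> bool" where
  "BDH X Y E \<longleftrightarrow> graph (X \<union> Y) E \<and> X \<inter> Y = {} \<and>
     (\<forall>u v. E u v \<longrightarrow> (u \<in> X \<and> v \<in> Y) \<or> (u \<in> Y \<and> v \<in> X)) \<and>
     distance_hereditary (X \<union> Y) E"

definition nbhd :: "('a \<Rightarrow> 'a \<Rightarrow> bool) \<Rightarrow> 'a \<Rightarrow> 'a set" where
  "nbhd E v = {u. E v u}"

text \<open>The hypergraph N_X(G) = (N(y) | y \<in> Y), as its set of members (multiplicities
  do not affect the 2-section).\<close>
definition nbhd_hypergraph :: "('a \<Rightarrow> 'a \<Rightarrow> bool) \<Rightarrow> 'a set \<Rightarrow> 'a set set" where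
  "nbhd_hypergraph E Y = nbhd E ` Y"

text \<open>H\<up>: identify equal members, keep only inclusion-maximal members.\<close>
definition maximal_members :: "'a set set \<Rightarrow> 'a set set" where
  "maximal_members H = {e \<in> H. \<not> (\<exists>e'\<in>H. e \<subset> e')}"

definition two_section :: "'a set set \<Rightarrow> 'a \<Rightarrow> 'a \<Rightarrow> bool" where
  "two_section H u v \<longleftrightarrow> u \<noteq> v \<and> (\<exists>e\<in>H. u \<in> e \<and> v \<in> e)"

end

theory Submission
  imports Defs
begin

text \<open>
  The 2-section of \<open>\<N>\<^sub>X(G)\<close> (and of its maximal members) is the half-square of \<open>G\<close> on
  \<open>X\<close>: two vertices of \<open>X\<close> are adjacent iff they have a common neighbour in \<open>Y\<close>. For
  \<open>S \<subseteq> X\<close>, distances in the half-square on \<open>S\<close> are exactly half the distances in \<open>G\<close>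
  restricted to \<open>S\<close> plus its neighbours in \<open>Y\<close>, so distance heredity passes from \<open>G\<close> to
  the half-square. A distance hereditary graph has no induced cycle of length at least 5, and an
  induced 4-cycle \<open>a b c d\<close> of the half-square would give the path
  \<open>y\<^sub>a\<^sub>b b y\<^sub>b\<^sub>c c y\<^sub>c\<^sub>d d y\<^sub>d\<^sub>a\<close> of \<open>G\<close>, whose ends have the common neighbour \<open>a\<close> in
  \<open>G\<close> but none on the path, contradicting distance heredity of \<open>G\<close>.
\<close>

definition induced_rel :: "'a set \<Rightarrow> ('a \<Rightarrow> 'a \<Rightarrow> bool) \<Rightarrow> 'a \<Rightarrow> 'a \<Rightarrow> bool" where
  "induced_rel S R a b \<longleftrightarrow> R a b \<and> a \<in> S \<and> b \<in> S"

lemma walk_snoc: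
  assumes "xs \<noteq> []"
  shows "walk S R (xs @ [v]) \<longleftrightarrow> walk S R xs \<and> v \<in> S \<and> R (last xs) v"
proof -
  have last: "last xs = xs ! (length xs - 1)" using assms by (simp add: last_conv_nth)
  have "(\<forall>i. Suc i < length (xs @ [v]) \<longrightarrow> R ((xs @ [v]) ! i) ((xs @ [v]) ! Suc i)) \<longleftrightarrow>
        (\<forall>i. Suc i < length xs \<longrightarrow> R (xs ! i) (xs ! Suc i)) \<and> R (last xs) v"
    (is "?snoc \<longleftrightarrow> ?init \<and> ?step")
  proof (intro iffI conjI allI impI)
    assume ?snoc
    fix i assume "Suc i < length xs"
    then show "R (xs ! i) (xs ! Suc i)"
      using spec[OF \<open>?snoc\<close>, of i] by (simp add: nth_append)
  next
    assume ?snoc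
    then show ?step
      using spec[OF \<open>?snoc\<close>, of "length xs - 1"] assms by (simp add: nth_append last)
  next
    assume "?init \<and> ?step"
    fix i assume i: "Suc i < length (xs @ [v])"
    show "R ((xs @ [v]) ! i) ((xs @ [v]) ! Suc i)"
    proof (cases "Suc i < length xs")
      case True
      then show ?thesis using \<open>?init \<and> ?step\<close> by (simp add: nth_append)
    next
      case False
      then have "i = length xs - 1" using i by simp
      then show ?thesis using \<open>?init \<and> ?step\<close> assms by (simp add: nth_append last)
    qed
  qed
  then show ?thesis using assms by (auto simp: walk_def)
qed

lemma walk_last_in: "walk S R xs \<Longrightarrow> last xs \<in> S"
  unfolding walk_def using last_in_set by blast

lemma walk_iff_relpowp:
  "(\<exists>xs. walk S R xs \<and> hd xs = u \<and> last xs = v \<and> length xs = Suc n) \<longleftrightarrow>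
     u \<in> S \<and> (induced_rel S R ^^ n) u v"
proof (induction n arbitrary: v)
  case 0
  show ?case by (auto simp: length_Suc_conv walk_def intro!: exI[of _ "[v]"])
next
  case (Suc n)
  have "(\<exists>xs. walk S R xs \<and> hd xs = u \<and> last xs = v \<and> length xs = Suc (Suc n)) \<longleftrightarrow>
        (\<exists>w. (\<exists>ys. walk S R ys \<and> hd ys = u \<and> last ys = w \<and> length ys = Suc n) \<and> induced_rel S R w v)"
  proof
    assume "\<exists>xs. walk S R xs \<and> hd xs = u \<and> last xs = v \<and> length xs = Suc (Suc n)"
    then obtain xs where xs: "walk S R xs" "hd xs = u" "last xs = v" "length xs = Suc (Suc n)"
      by blast
    obtain ys w where "xs = ys @ [w]" "length ys = Suc n"
      using length_Suc_conv_rev[THEN iffD1, OF xs(4)] by blast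
    then have ys: "walk S R (ys @ [v])" "hd (ys @ [v]) = u" "length ys = Suc n"
      using xs by auto
    then have "ys \<noteq> []" by auto
    then have "walk S R ys" "hd ys = u" "induced_rel S R (last ys) v"
      using ys walk_last_in[of S R ys] by (auto simp: walk_snoc induced_rel_def)
    then show "\<exists>w. (\<exists>ys. walk S R ys \<and> hd ys = u \<and> last ys = w \<and> length ys = Suc n) \<and> induced_rel S R w v"
      using ys(3) by blast
  next
    assume "\<exists>w. (\<exists>ys. walk S R ys \<and> hd ys = u \<and> last ys = w \<and> length ys = Suc n) \<and> induced_rel S R w v"
    then obtain ys where "walk S R ys" "hd ys = u" "length ys = Suc n" "induced_rel S R (last ys) v"
      by blast
    moreover have "ys \<noteq> []" using \<open>length ys = Suc n\<close> by auto
    ultimately show "\<exists>xs. walk S R xs \<and> hd xs = u \<and> last xs = v \<and> length xs = Suc (Suc n)"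
      by (intro exI[of _ "ys @ [v]"]) (auto simp: walk_snoc induced_rel_def)
  qed
  also have "\<dots> \<longleftrightarrow> u \<in> S \<and> (induced_rel S R ^^ Suc n) u v"
    using Suc.IH by auto
  finally show ?case .
qed

lemma gdist_eq_Least: "gdist S R u v = (LEAST n. u \<in> S \<and> (induced_rel S R ^^ n) u v)"
  unfolding gdist_def walk_iff_relpowp ..

lemma gdist_le:
  assumes "u \<in> S" "(induced_rel S R ^^ n) u v"
  shows "gdist S R u v \<le> n"
  using assms unfolding gdist_eq_Least by (auto intro: Least_le)

lemma relpowp_gdist:
  assumes "u \<in> S" "(induced_rel S R ^^ n) u v"
  shows "(induced_rel S R ^^ gdist S R u v) u v"
  using assms unfolding gdist_eq_Least by (metis (mono_tags, lifting) LeastI)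

lemma connected_graph_iff_rtranclp:
  "connected_graph S R \<longleftrightarrow> (\<forall>u\<in>S. \<forall>v\<in>S. (induced_rel S R)\<^sup>*\<^sup>* u v)"
proof -
  have "(\<exists>xs. walk S R xs \<and> hd xs = u \<and> last xs = v) \<longleftrightarrow>
        (\<exists>n. \<exists>xs. walk S R xs \<and> hd xs = u \<and> last xs = v \<and> length xs = Suc n)" for u v
    by (metis Suc_pred length_greater_0_conv walk_def)
  then show ?thesis
    unfolding connected_graph_def walk_iff_relpowp
    by (meson relpowp_imp_rtranclp rtranclp_imp_relpowp)
qed

lemma connected_graph_relpowp:
  assumes "connected_graph S R" "u \<in> S" "v \<in> S"
  obtains n where "(induced_rel S R ^^ n) u v"
  using assms by (meson connected_graph_iff_rtranclp rtranclp_imp_relpowp)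

lemma symp_induced_rel: "symp R \<Longrightarrow> symp (induced_rel S R)"
  by (auto simp: symp_def induced_rel_def)

lemma connected_graph_walk:
  assumes "symp R" "walk S R ps"
  shows "connected_graph (set ps) R"
proof -
  let ?R = "induced_rel (set ps) R"
  have from_hd: "?R\<^sup>*\<^sup>* (ps ! 0) (ps ! i)" if "i < length ps" for i
    using that
  proof (induction i)
    case (Suc i)
    then have "?R (ps ! i) (ps ! Suc i)"
      using assms(2) by (auto simp: walk_def induced_rel_def)
    then show ?case using Suc by (meson Suc_lessD rtranclp.rtrancl_into_rtrancl)
  qed simp
  have "?R\<^sup>*\<^sup>* a b" if a: "a \<in> set ps" and b: "b \<in> set ps" for a b
  proof -
    obtain i where "i < length ps" "a = ps ! i" using a by (auto simp: in_set_conv_nth)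
    moreover obtain j where "j < length ps" "b = ps ! j" using b by (auto simp: in_set_conv_nth)
    ultimately show ?thesis
      using from_hd symp_rtranclp[OF symp_induced_rel[OF assms(1)]]
      by (meson rtranclp_trans sympD)
  qed
  then show ?thesis unfolding connected_graph_iff_rtranclp by blast
qed

lemma distance_hereditary_common_neighbour:
  assumes dh: "distance_hereditary V R" and "S \<subseteq> V" "connected_graph S R"
    and "u \<in> S" "v \<in> S" "u \<noteq> v" "\<not> R u v"
    and "w \<in> V" "R u w" "R w v"
  shows "\<exists>w\<in>S. R u w \<and> R w v"
proof -
  have "(induced_rel V R ^^ 2) u v"
    unfolding numeral_2_eq_2
    by (rule relpowp_Suc_I[OF relpowp_Suc_I[OF relpowp_0_I]])
      (use assms in \<open>auto simp: induced_rel_def\<close>)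
  then have "gdist V R u v \<le> 2" using assms by (intro gdist_le) auto
  moreover have "gdist S R u v = gdist V R u v"
    using dh assms unfolding distance_hereditary_def by blast
  moreover obtain n where "(induced_rel S R ^^ n) u v"
    using connected_graph_relpowp assms by metis
  then have "(induced_rel S R ^^ gdist S R u v) u v" using relpowp_gdist assms by metis
  ultimately have "(induced_rel S R ^^ 2) u v"
    using assms by (auto simp: le_Suc_eq numeral_2_eq_2 induced_rel_def)
  then show ?thesis
    by (auto simp: numeral_2_eq_2 induced_rel_def elim!: relpowp_Suc_E relpowp_0_E)
qed

lemma distance_hereditary_induced_cycle_length:
  assumes "symp R" and dh: "distance_hereditary V R" and cyc: "induced_cycle V R xs"
  shows "length xs \<le> 4"
proof (rule ccontr)
  define k where "k = length xs"
  assume "\<not> length xs \<le> 4"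
  then have k5: "k \<ge> 5" unfolding k_def by simp
  have dist: "distinct xs" and sub: "set xs \<subseteq> V"
    and adj: "\<And>i. i < k \<Longrightarrow> R (xs ! i) (xs ! ((i + 1) mod k))"
    and ind: "\<And>i j. i < k \<Longrightarrow> j < k \<Longrightarrow> R (xs ! i) (xs ! j) \<Longrightarrow> j = (i + 1) mod k \<or> i = (j + 1) mod k"
    using cyc unfolding induced_cycle_def k_def by auto
  define S where "S = set (tl xs)"
  have S: "S = set xs - {xs ! 0}"
    unfolding S_def using dist k5 k_def by (cases xs) auto
  have "walk S R (tl xs)"
    unfolding walk_def S_def
  proof (intro conjI allI impI)
    show "tl xs \<noteq> []" using k5 k_def by (cases xs) auto
    fix i assume "Suc i < length (tl xs)"
    then show "R (tl xs ! i) (tl xs ! Suc i)"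
      using adj[of "Suc i"] k_def by (simp add: nth_tl)
  qed simp
  then have con: "connected_graph S R"
    using connected_graph_walk[OF \<open>symp R\<close>] S_def by blast
  have SV: "S \<subseteq> V" using sub S by auto
  have ne: "xs ! i \<noteq> xs ! j" if "i < k" "j < k" "i \<noteq> j" for i j
    using nth_eq_iff_index_eq[OF dist] that k_def by simp
  have "xs ! 1 \<noteq> xs ! 0" "xs ! (k - 1) \<noteq> xs ! 0" "xs ! 1 \<noteq> xs ! (k - 1)"
    by (rule ne; use k5 in simp)+
  then have ends: "xs ! 1 \<in> S" "xs ! (k - 1) \<in> S" "xs ! 1 \<noteq> xs ! (k - 1)"
    using S k5 k_def by auto
  have nonadj: "\<not> R (xs ! 1) (xs ! (k - 1))"
    using ind[of 1 "k - 1"] k5 by (auto simp: mod_if)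
  have "R (xs ! 0) (xs ! 1)" using adj[of 0] k5 by simp
  moreover have "R (xs ! (k - 1)) (xs ! 0)" using adj[of "k - 1"] k5 by simp
  moreover have "xs ! 0 \<in> set xs" using k5 k_def by (intro nth_mem) linarith
  then have "xs ! 0 \<in> V" using sub by blast
  ultimately have via_hd: "xs ! 0 \<in> V" "R (xs ! 1) (xs ! 0)" "R (xs ! 0) (xs ! (k - 1))"
    using \<open>symp R\<close> by (auto dest: sympD)
  \<comment> \<open>\<open>xs ! 1\<close> and \<open>xs ! (k - 1)\<close> are at distance 2 via \<open>xs ! 0\<close>, so the path \<open>tl xs\<close>
    must contain a common neighbour; for \<open>k \<ge> 5\<close> it cannot.\<close>
  obtain w where w: "w \<in> S" "R (xs ! 1) w" "R w (xs ! (k - 1))"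
    using distance_hereditary_common_neighbour[OF dh SV con ends nonadj via_hd] by blast
  obtain j where j: "j < k" "j \<noteq> 0" "w = xs ! j"
    using \<open>w \<in> S\<close> S k_def by (metis DiffE in_set_conv_nth insertI1)
  have "j = 2"
    using ind[of 1 j] w(2) j k5 by (auto simp: mod_if split: if_splits)
  then show False
    using ind[of j "k - 1"] w(3) j k5 by (auto simp: mod_if split: if_splits)
qed

definition bipartite :: "'a set \<Rightarrow> 'a set \<Rightarrow> ('a \<Rightarrow> 'a \<Rightarrow> bool) \<Rightarrow> bool" where
  "bipartite X Y E \<longleftrightarrow> X \<inter> Y = {} \<and> (\<forall>u v. E u v \<longrightarrow> u \<in> X \<and> v \<in> Y \<or> u \<in> Y \<and> v \<in> X)"

lemma bipartite_edge_from_X: "bipartite X Y E \<Longrightarrow> E u v \<Longrightarrow> u \<in> X \<Longrightarrow> v \<in> Y \<and> v \<notin> X"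
  unfolding bipartite_def by blast

lemma bipartite_edge_from_Y: "bipartite X Y E \<Longrightarrow> E u v \<Longrightarrow> u \<in> Y \<Longrightarrow> v \<in> X \<and> v \<notin> Y"
  unfolding bipartite_def by blast

lemma BDH_symp: "BDH X Y E \<Longrightarrow> symp E"
  unfolding BDH_def graph_def symp_def by blast

lemma BDH_bipartite: "BDH X Y E \<Longrightarrow> bipartite X Y E"
  unfolding BDH_def bipartite_def by blast

lemma BDH_distance_hereditary: "BDH X Y E \<Longrightarrow> distance_hereditary (X \<union> Y) E"
  unfolding BDH_def by blast

lemma BDH_finite: "BDH X Y E \<Longrightarrow> finite (X \<union> Y)"
  unfolding BDH_def graph_def by blast

lemma BDH_swap: "BDH X Y E \<Longrightarrow> BDH Y X E"
  unfolding BDH_def by (auto simp: Un_commute Int_commute)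

definition half_square :: "('a \<Rightarrow> 'a \<Rightarrow> bool) \<Rightarrow> 'a set \<Rightarrow> 'a \<Rightarrow> 'a \<Rightarrow> bool" where
  "half_square E Y a b \<longleftrightarrow> a \<noteq> b \<and> (\<exists>y\<in>Y. E y a \<and> E y b)"

lemma symp_half_square: "symp E \<Longrightarrow> symp (half_square E Y)"
  unfolding symp_def half_square_def by blast

lemma two_section_nbhd_hypergraph: "two_section (nbhd_hypergraph E Y) = half_square E Y"
  unfolding two_section_def nbhd_hypergraph_def nbhd_def half_square_def by auto

lemma two_section_maximal_members:
  assumes "finite F"
  shows "two_section (maximal_members F) = two_section F"
proof -
  have "\<exists>e'\<in>maximal_members F. e \<subseteq> e'" if e: "e \<in> F" for e
  proof -
    obtain m where "m \<in> F" "e \<subseteq> m" "\<forall>b. b \<in> F \<and> e \<subseteq> b \<longrightarrow> m \<subseteq> b \<longrightarrow> m = b"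
      using finite_has_maximal2[of "{b \<in> F. e \<subseteq> b}" e] assms e by auto
    then have "m \<in> maximal_members F" unfolding maximal_members_def by blast
    then show ?thesis using \<open>e \<subseteq> m\<close> by blast
  qed
  then have "two_section F u v \<Longrightarrow> two_section (maximal_members F) u v" for u v
    unfolding two_section_def by (meson subsetD)
  moreover have "two_section (maximal_members F) u v \<Longrightarrow> two_section F u v" for u v
    unfolding two_section_def maximal_members_def by blast
  ultimately show ?thesis by (intro ext iffI)
qed

lemma relpowp_half_square_imp_double:
  assumes "symp E" "S \<subseteq> T" "\<forall>y\<in>Y. (\<exists>x\<in>S. E y x) \<longrightarrow> y \<in> T"
  shows "(induced_rel S (half_square E Y) ^^ n) u v \<Longrightarrow> (induced_rel T E ^^ (2 * n)) u v"
proof (induction n arbitrary: v)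
  case (Suc n)
  from Suc.prems obtain w where "(induced_rel S (half_square E Y) ^^ n) u w"
      "induced_rel S (half_square E Y) w v"
    by (auto elim: relpowp_Suc_E)
  then have "(induced_rel T E ^^ (2 * n)) u w" using Suc.IH by blast
  moreover obtain y where y: "y \<in> Y" "E y w" "E y v" "w \<in> S" "v \<in> S"
    using \<open>induced_rel S (half_square E Y) w v\<close> by (auto simp: induced_rel_def half_square_def)
  moreover have "induced_rel T E w y" "induced_rel T E y v"
    using y assms by (auto simp: induced_rel_def dest: sympD)
  ultimately show ?case by (auto intro: relpowp_Suc_I)
qed simp

lemma relpowp_imp_half_square:
  assumes "symp E" "bipartite X Y E" "S \<subseteq> X" "T \<inter> X \<subseteq> S" "u \<in> S"
  shows "(induced_rel T E ^^ m) u v \<Longrightarrow>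
    \<exists>n w. w \<in> S \<and> (induced_rel S (half_square E Y) ^^ n) u w \<and>
      (v = w \<and> 2 * n \<le> m \<or> E w v \<and> 2 * n + 1 \<le> m)"
proof (induction m arbitrary: v)
  case 0
  then show ?case using assms(5) by (auto intro!: exI[of _ 0])
next
  case (Suc m)
  from Suc.prems obtain p where up: "(induced_rel T E ^^ m) u p" and "induced_rel T E p v"
    by (auto elim: relpowp_Suc_E)
  then have pv: "E p v" "v \<in> T" by (auto simp: induced_rel_def)
  obtain n w where w: "w \<in> S" "(induced_rel S (half_square E Y) ^^ n) u w"
    and "p = w \<and> 2 * n \<le> m \<or> E w p \<and> 2 * n + 1 \<le> m"
    using Suc.IH[OF up] by blast
  then consider "p = w" "2 * n \<le> m" | "E w p" "2 * n + 1 \<le> m" by blast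
  then show ?case
  proof cases
    case 1
    then show ?thesis using w pv by auto
  next
    case 2
    have "p \<in> Y" using bipartite_edge_from_X[OF assms(2) \<open>E w p\<close>] w assms(3) by blast
    then have "v \<in> S" using bipartite_edge_from_Y[OF assms(2) \<open>E p v\<close>] pv assms(4) by blast
    show ?thesis
    proof (cases "v = w")
      case True
      then show ?thesis using w 2 by (intro exI[of _ n] exI[of _ w]) auto
    next
      case False
      then have "induced_rel S (half_square E Y) w v"
        using \<open>p \<in> Y\<close> \<open>E w p\<close> pv \<open>v \<in> S\<close> w assms(1)
        by (auto simp: induced_rel_def half_square_def dest: sympD)
      then show ?thesis
        using w 2 \<open>v \<in> S\<close> by (intro exI[of _ "Suc n"] exI[of _ v]) (auto intro: relpowp_Suc_I)
    qed
  qed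
qed

lemma gdist_eq_double_half_square:
  assumes E: "symp E" "bipartite X Y E" and T: "T \<inter> X = S" "\<forall>y\<in>Y. (\<exists>x\<in>S. E y x) \<longrightarrow> y \<in> T"
    and uv: "u \<in> S" "v \<in> S" "(induced_rel S (half_square E Y) ^^ n) u v"
  shows "gdist T E u v = 2 * gdist S (half_square E Y) u v"
proof -
  let ?d = "gdist S (half_square E Y) u v"
  have "S \<subseteq> X" "S \<subseteq> T" "u \<in> T" using T(1) uv(1) by blast+
  have "(induced_rel S (half_square E Y) ^^ ?d) u v"
    using relpowp_gdist uv(1,3) by metis
  then have double: "(induced_rel T E ^^ (2 * ?d)) u v"
    using relpowp_half_square_imp_double[OF E(1) \<open>S \<subseteq> T\<close> T(2)] by blast
  then have le: "gdist T E u v \<le> 2 * ?d" using gdist_le[OF \<open>u \<in> T\<close>] by blast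
  have "(induced_rel T E ^^ gdist T E u v) u v" using relpowp_gdist[OF \<open>u \<in> T\<close> double] .
  then obtain n w where "w \<in> S" "(induced_rel S (half_square E Y) ^^ n) u w"
      "v = w \<and> 2 * n \<le> gdist T E u v \<or> E w v \<and> 2 * n + 1 \<le> gdist T E u v"
    using relpowp_imp_half_square[OF E \<open>S \<subseteq> X\<close>] T(1) uv(1) by blast
  moreover have "\<not> E w v"
    using bipartite_edge_from_X[OF E(2)] \<open>w \<in> S\<close> \<open>S \<subseteq> X\<close> uv(2) by blast
  ultimately have "?d \<le> n" "2 * n \<le> gdist T E u v"
    using gdist_le[OF uv(1)] by auto
  then show ?thesis using le by linarith
qed

lemma connected_graph_add_neighbours:
  assumes "symp E" "connected_graph S (half_square E Y)"
  shows "connected_graph (S \<union> {y \<in> Y. \<exists>x\<in>S. E y x}) E"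
proof -
  let ?T = "S \<union> {y \<in> Y. \<exists>x\<in>S. E y x}"
  let ?R = "induced_rel ?T E"
  have within_S: "?R\<^sup>*\<^sup>* s s'" if ss': "s \<in> S" "s' \<in> S" for s s'
  proof -
    obtain n where "(induced_rel S (half_square E Y) ^^ n) s s'"
      using connected_graph_relpowp[OF assms(2) ss'] .
    then have "(?R ^^ (2 * n)) s s'"
      by (rule relpowp_half_square_imp_double[OF assms(1), rotated -1]) auto
    then show ?thesis by (rule relpowp_imp_rtranclp)
  qed
  have from_S: "\<exists>s\<in>S. ?R\<^sup>*\<^sup>* s t" if t: "t \<in> ?T" for t
  proof (cases "t \<in> S")
    case False
    then obtain s where "s \<in> S" "E t s" using t by blast
    then have "?R s t" using t assms(1) by (auto simp: induced_rel_def dest: sympD)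
    then show ?thesis using \<open>s \<in> S\<close> by blast
  qed blast
  have "?R\<^sup>*\<^sup>* a b" if ab: "a \<in> ?T" "b \<in> ?T" for a b
  proof -
    obtain s s' where "s \<in> S" "?R\<^sup>*\<^sup>* s a" "s' \<in> S" "?R\<^sup>*\<^sup>* s' b"
      using from_S ab by meson
    moreover have "?R\<^sup>*\<^sup>* a s"
      using \<open>?R\<^sup>*\<^sup>* s a\<close> symp_rtranclp[OF symp_induced_rel[OF assms(1)]] by (blast dest: sympD)
    ultimately show ?thesis using within_S by (meson rtranclp_trans)
  qed
  then show ?thesis unfolding connected_graph_iff_rtranclp by blast
qed

lemma distance_hereditary_half_square:
  assumes "BDH X Y E"
  shows "distance_hereditary X (half_square E Y)"
  unfolding distance_hereditary_def
proof (intro allI impI ballI)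
  fix S u v
  assume "S \<subseteq> X" "connected_graph S (half_square E Y)" "u \<in> S" "v \<in> S"
  have E: "symp E" "bipartite X Y E" using BDH_symp BDH_bipartite assms by blast+
  define T where "T = S \<union> {y \<in> Y. \<exists>x\<in>S. E y x}"
  have "T \<inter> X = S" using \<open>S \<subseteq> X\<close> E(2) unfolding T_def bipartite_def by blast
  obtain n where n: "(induced_rel S (half_square E Y) ^^ n) u v"
    using connected_graph_relpowp \<open>connected_graph S _\<close> \<open>u \<in> S\<close> \<open>v \<in> S\<close> by metis
  then have "(induced_rel X (half_square E Y) ^^ n) u v"
    by (rule relpowp_mono[rotated]) (use \<open>S \<subseteq> X\<close> in \<open>auto simp: induced_rel_def\<close>)
  then have "gdist (X \<union> Y) E u v = 2 * gdist X (half_square E Y) u v"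
    using gdist_eq_double_half_square[OF E, of "X \<union> Y" X] \<open>u \<in> S\<close> \<open>v \<in> S\<close> \<open>S \<subseteq> X\<close>
    by blast
  moreover have "gdist T E u v = 2 * gdist S (half_square E Y) u v"
    using gdist_eq_double_half_square[OF E \<open>T \<inter> X = S\<close> _ _ _ n]
      \<open>u \<in> S\<close> \<open>v \<in> S\<close> unfolding T_def by blast
  moreover have "gdist T E u v = gdist (X \<union> Y) E u v"
  proof -
    have "T \<subseteq> X \<union> Y" using \<open>S \<subseteq> X\<close> unfolding T_def by blast
    moreover have "connected_graph T E"
      unfolding T_def by (rule connected_graph_add_neighbours) fact+
    ultimately show ?thesis
      using BDH_distance_hereditary[OF assms] \<open>u \<in> S\<close> \<open>v \<in> S\<close>
      unfolding distance_hereditary_def T_def by blast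
  qed
  ultimately show "gdist S (half_square E Y) u v = gdist X (half_square E Y) u v" by simp
qed

lemma induced_cycle_length_4:
  assumes "induced_cycle V R xs" "length xs = 4"
  obtains a b c d where "{a, b, c, d} \<subseteq> V" "a \<noteq> c" "b \<noteq> d"
    "R a b" "R b c" "R c d" "R d a" "\<not> R a c" "\<not> R b d"
proof -
  obtain a b c d where xs: "xs = [a, b, c, d]"
    using assms(2) by (auto simp: numeral_eq_Suc length_Suc_conv)
  have adj: "R (xs ! i) (xs ! ((i + 1) mod 4))" if "i < 4" for i
    using assms that unfolding induced_cycle_def by metis
  have ind: "j = (i + 1) mod 4 \<or> i = (j + 1) mod 4" if "i < 4" "j < 4" "R (xs ! i) (xs ! j)" for i j
    using assms that unfolding induced_cycle_def by metis
  show thesis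
  proof
    show "{a, b, c, d} \<subseteq> V" "a \<noteq> c" "b \<noteq> d"
      using assms(1) unfolding induced_cycle_def xs by auto
    show "R a b" "R b c" "R c d" "R d a"
      using adj[of 0] adj[of 1] adj[of 2] adj[of 3] unfolding xs by simp_all
    show "\<not> R a c" "\<not> R b d"
      using ind[of 0 2] ind[of 1 3] unfolding xs by auto
  qed
qed

lemma half_square_no_induced_C4:
  assumes "BDH X Y E" "induced_cycle X (half_square E Y) xs"
  shows "length xs \<noteq> 4"
proof
  assume "length xs = 4"
  then obtain a b c d where abcd: "{a, b, c, d} \<subseteq> X" "a \<noteq> c" "b \<noteq> d"
    "half_square E Y a b" "half_square E Y b c" "half_square E Y c d" "half_square E Y d a"
    "\<not> half_square E Y a c" "\<not> half_square E Y b d"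
    using induced_cycle_length_4[OF assms(2)] by blast
  have E: "symp E" "bipartite X Y E" using BDH_symp BDH_bipartite assms(1) by blast+
  obtain yab ybc ycd yda where y: "{yab, ybc, ycd, yda} \<subseteq> Y"
    "E yab a" "E yab b" "E ybc b" "E ybc c" "E ycd c" "E ycd d" "E yda d" "E yda a"
    using abcd(4-7) unfolding half_square_def by blast
  have no_chord: "\<not> E yab c" "\<not> E yab d" "\<not> E yda b" "\<not> E yda c"
    using y abcd unfolding half_square_def by blast+
  have YY: "\<not> E y y'" if "y \<in> Y" "y' \<in> Y" for y y'
    using bipartite_edge_from_Y[OF E(2)] that by blast
  define ps where "ps = [yab, b, ybc, c, ycd, d, yda]"
  have "walk (set ps) E ps"
    using y E(1) unfolding ps_def walk_def by (auto simp: less_Suc_eq nth_Cons' dest: sympD)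
  then have "connected_graph (set ps) E" by (rule connected_graph_walk[OF E(1)])
  moreover have "set ps \<subseteq> X \<union> Y" using abcd(1) y(1) unfolding ps_def by auto
  moreover have "yab \<noteq> yda" "\<not> E yab yda" using no_chord y YY by auto
  moreover have "a \<in> X \<union> Y" "E a yda" using abcd(1) y E(1) by (auto dest: sympD)
  ultimately obtain w where "w \<in> set ps" "E yab w" "E w yda"
    using distance_hereditary_common_neighbour[OF BDH_distance_hereditary[OF assms(1)]] y
    unfolding ps_def by (metis list.set_intros(1) list.set_intros(2))
  then show False
    using no_chord y YY E(1) unfolding ps_def by (auto dest: sympD)
qed

lemma ptolemaic_half_square:
  assumes "BDH X Y E"
  shows "ptolemaic X (half_square E Y)"
  unfolding ptolemaic_def chordal_def
proof (intro conjI notI)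
  show dh: "distance_hereditary X (half_square E Y)"
    using distance_hereditary_half_square[OF assms] .
  assume "\<exists>xs. 4 \<le> length xs \<and> induced_cycle X (half_square E Y) xs"
  then obtain xs where "4 \<le> length xs" "induced_cycle X (half_square E Y) xs" by blast
  moreover have "symp (half_square E Y)" using BDH_symp[OF assms] by (rule symp_half_square)
  ultimately show False
    using distance_hereditary_induced_cycle_length[OF _ dh] half_square_no_induced_C4[OF assms]
    by fastforce
qed

theorem proposition2:
  fixes X Y :: "'a set" and E :: "'a \<Rightarrow> 'a \<Rightarrow> bool"
  assumes "BDH X Y E"
  shows "ptolemaic X (two_section (nbhd_hypergraph E Y)) \<and>
         ptolemaic X (two_section (maximal_members (nbhd_hypergraph E Y))) \<and>
         ptolemaic Y (two_section (nbhd_hypergraph E X)) \<and>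
         ptolemaic Y (two_section (maximal_members (nbhd_hypergraph E X)))"
proof -
  have "finite (nbhd_hypergraph E Y)" "finite (nbhd_hypergraph E X)"
    using BDH_finite[OF assms] unfolding nbhd_hypergraph_def by auto
  then show ?thesis
    using ptolemaic_half_square[OF assms] ptolemaic_half_square[OF BDH_swap[OF assms]]
    by (simp add: two_section_maximal_members two_section_nbhd_hypergraph)
qed

end
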